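(* Let $A=I_0+\dots+I_n$ be a sum of C$^*$-ideals, $p\in\{0,\dots,n\}$ and $J\subseteq\{0,\dots,n\}$ with $|J|=p+1$. Then $$B_J/(B_J\cap Q_{p-1})\cong S^{n-p}\Big(\bigcap_{j\in J}I_j\Big)$$ as C$^*$-algebras.
   Context: $\Delta^n=\{x\in[0,1]^{n+1}:\sum_ix_i=1\}$, $\partial\Delta^n$ = points with a zero coordinate, $\Delta^n_j=\{x\in\Delta^n:x_j\le x_i\ \forall i\}$. $B=\{f:\Delta^n\to A\text{ continuous}: f|_{\partial\Delta^n}=0,\ f(\Delta^n_j)\subseteq I_j\ \forall j\}$; $B_J=\{f\in B:f(\Delta^n_{j'})=0\ \forall j'\notin J\}$; $Q_p=\sum_{|L|\le p+1}B_L$ for $p\in\mathbb Z$ (so $Q_{-1}=0$). $S^k$ denotes the $k$-fold C$^*$-suspension, $SA=\{f:[0,1]\to A\text{ continuous}:f(0)=f(1)=0\}$, with $S^0$ the identity. *)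

theory Defs
  imports "HOL-Analysis.Analysis"
begin

class cstar_algebra = banach + real_normed_algebra +
  fixes scaleC :: "complex \<Rightarrow> 'a \<Rightarrow> 'a"
    and adj :: "'a \<Rightarrow> 'a"
  assumes scaleC_add_right: "scaleC c (x + y) = scaleC c x + scaleC c y"
    and scaleC_add_left: "scaleC (c + d) x = scaleC c x + scaleC d x"
    and scaleC_scaleC: "scaleC c (scaleC d x) = scaleC (c * d) x"
    and scaleC_one: "scaleC 1 x = x"
    and scaleR_scaleC: "scaleR r x = scaleC (complex_of_real r) x"
    and norm_scaleC: "norm (scaleC c x) = cmod c * norm x"
    and mult_scaleC_left: "scaleC c x * y = scaleC c (x * y)"
    and mult_scaleC_right: "x * scaleC c y = scaleC c (x * y)"
    and adj_adj: "adj (adj x) = x"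
    and adj_add: "adj (x + y) = adj x + adj y"
    and adj_scaleC: "adj (scaleC c x) = scaleC (cnj c) (adj x)"
    and adj_mult: "adj (x * y) = adj y * adj x"
    and cstar_identity: "norm (adj x * x) = norm x * norm x"

definition cstar_ideal :: "'a::cstar_algebra set \<Rightarrow> bool" where
  "cstar_ideal I \<longleftrightarrow> closed I \<and> 0 \<in> I \<and>
     (\<forall>x\<in>I. \<forall>y\<in>I. x + y \<in> I) \<and>
     (\<forall>c. \<forall>x\<in>I. scaleC c x \<in> I) \<and>
     (\<forall>x\<in>I. \<forall>a. a * x \<in> I \<and> x * a \<in> I)"

definition stdsimplex :: "nat \<Rightarrow> (nat \<Rightarrow> real) set" where
  "stdsimplex n = {x. (\<forall>i. 0 \<le> x i) \<and> (\<forall>i>n. x i = 0) \<and> (\<Sum>i\<le>n. x i) = 1}"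

definition stdsimplex_bdry :: "nat \<Rightarrow> (nat \<Rightarrow> real) set" where
  "stdsimplex_bdry n = {x \<in> stdsimplex n. \<exists>i\<le>n. x i = 0}"

definition stdsimplex_part :: "nat \<Rightarrow> nat \<Rightarrow> (nat \<Rightarrow> real) set" where
  "stdsimplex_part n j = {x \<in> stdsimplex n. \<forall>i\<le>n. x j \<le> x i}"

text \<open>Functions are made extensional: zero outside their domain.\<close>
definition Balg :: "nat \<Rightarrow> (nat \<Rightarrow> 'a::cstar_algebra set) \<Rightarrow> ((nat \<Rightarrow> real) \<Rightarrow> 'a) set" where
  "Balg n I = {f. continuous_on (stdsimplex n) f \<and> (\<forall>x. x \<notin> stdsimplex n \<longrightarrow> f x = 0) \<and>
      (\<forall>x\<in>stdsimplex_bdry n. f x = 0) \<and> (\<forall>j\<le>n. \<forall>x\<in>stdsimplex_part n j. f x \<in> I j)}"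

definition BalgJ :: "nat \<Rightarrow> (nat \<Rightarrow> 'a::cstar_algebra set) \<Rightarrow> nat set \<Rightarrow> ((nat \<Rightarrow> real) \<Rightarrow> 'a) set" where
  "BalgJ n I J = {f \<in> Balg n I. \<forall>j'\<le>n. j' \<notin> J \<longrightarrow> (\<forall>x\<in>stdsimplex_part n j'. f x = 0)}"

text \<open>Q_p = sum of B_L over L subset of {0..n} with |L| <= p+1 (p an integer; Q_{-1} = 0).\<close>
definition Qalg :: "nat \<Rightarrow> (nat \<Rightarrow> 'a::cstar_algebra set) \<Rightarrow> int \<Rightarrow> ((nat \<Rightarrow> real) \<Rightarrow> 'a) set" where
  "Qalg n I p = {(\<lambda>x. \<Sum>L\<in>{L. L \<subseteq> {..n} \<and> int (card L) \<le> p + 1}. g L x) | g.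
      \<forall>L. L \<subseteq> {..n} \<and> int (card L) \<le> p + 1 \<longrightarrow> g L \<in> BalgJ n I L}"

section \<open>Iterated suspension, modelled on the unitcube [0,1]^k\<close>

definition unitcube :: "nat \<Rightarrow> (nat \<Rightarrow> real) set" where
  "unitcube k = {t. (\<forall>i<k. 0 \<le> t i \<and> t i \<le> 1) \<and> (\<forall>i\<ge>k. t i = 0)}"

definition unitcube_bdry :: "nat \<Rightarrow> (nat \<Rightarrow> real) set" where
  "unitcube_bdry k = {t \<in> unitcube k. \<exists>i<k. t i = 0 \<or> t i = 1}"

text \<open>S^k D = continuous functions [0,1]^k -> D vanishing on the boundary of the unitcube
  (S^0 D = D via evaluation at the single point of unitcube 0).\<close>
definition susp :: "nat \<Rightarrow> 'a::cstar_algebra set \<Rightarrow> ((nat \<Rightarrow> real) \<Rightarrow> 'a) set" where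
  "susp k D = {g. continuous_on (unitcube k) g \<and> (\<forall>t. t \<notin> unitcube k \<longrightarrow> g t = 0) \<and>
      (\<forall>t\<in>unitcube_bdry k. g t = 0) \<and> (\<forall>t. g t \<in> D)}"

definition fadd :: "('b \<Rightarrow> 'a::cstar_algebra) \<Rightarrow> ('b \<Rightarrow> 'a) \<Rightarrow> 'b \<Rightarrow> 'a" where
  "fadd f g = (\<lambda>x. f x + g x)"
definition fmul :: "('b \<Rightarrow> 'a::cstar_algebra) \<Rightarrow> ('b \<Rightarrow> 'a) \<Rightarrow> 'b \<Rightarrow> 'a" where
  "fmul f g = (\<lambda>x. f x * g x)"
definition fscale :: "complex \<Rightarrow> ('b \<Rightarrow> 'a::cstar_algebra) \<Rightarrow> 'b \<Rightarrow> 'a" where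
  "fscale c f = (\<lambda>x. scaleC c (f x))"
definition fadj :: "('b \<Rightarrow> 'a::cstar_algebra) \<Rightarrow> 'b \<Rightarrow> 'a" where
  "fadj f = (\<lambda>x. adj (f x))"
definition supnorm :: "('b \<Rightarrow> 'a::cstar_algebra) \<Rightarrow> real" where
  "supnorm f = (SUP x. norm (f x))"

definition coset :: "('b \<Rightarrow> 'a::cstar_algebra) set \<Rightarrow> ('b \<Rightarrow> 'a) \<Rightarrow> ('b \<Rightarrow> 'a) set" where
  "coset K f = {fadd f k | k. k \<in> K}"

definition quot_norm :: "('b \<Rightarrow> 'a::cstar_algebra) set \<Rightarrow> ('b \<Rightarrow> 'a) \<Rightarrow> real" where
  "quot_norm K f = (INF k\<in>K. supnorm (fadd f k))"

definition quot_cstar_iso ::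
  "('b \<Rightarrow> 'a::cstar_algebra) set \<Rightarrow> ('b \<Rightarrow> 'a) set \<Rightarrow> ('c \<Rightarrow> 'a) set \<Rightarrow> bool" where
  "quot_cstar_iso X K Y \<longleftrightarrow> (\<exists>\<Psi>. bij_betw \<Psi> (coset K ` X) Y \<and>
     (\<forall>f\<in>X. \<forall>g\<in>X. \<Psi> (coset K (fadd f g)) = fadd (\<Psi> (coset K f)) (\<Psi> (coset K g))) \<and>
     (\<forall>f\<in>X. \<forall>g\<in>X. \<Psi> (coset K (fmul f g)) = fmul (\<Psi> (coset K f)) (\<Psi> (coset K g))) \<and>
     (\<forall>c. \<forall>f\<in>X. \<Psi> (coset K (fscale c f)) = fscale c (\<Psi> (coset K f))) \<and>
     (\<forall>f\<in>X. \<Psi> (coset K (fadj f)) = fadj (\<Psi> (coset K f))) \<and>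
     (\<forall>f\<in>X. supnorm (\<Psi> (coset K f)) = quot_norm K f))"

end

theory Submission
  imports Defs
begin

text \<open>
Let F be the face of the simplex on which the coordinates indexed by J are equal and
minimal, i.e. the intersection of the \<Delta>_j for j \<in> J. Every B_L with |L| \<le> p misses some
j \<in> J and therefore vanishes on F; conversely, a function of B_J vanishing on F is split by
the partition of unity (x_j - t) / (\<Sum>i\<in>J. x_i - t), t the common minimum, into pieces
lying in the B_(J-{j}). Hence B_J \<inter> Q_(p-1) is exactly the kernel of restriction to F.

The face F is homeomorphic to the cube [0,1]^(n-p): a point of F is determined by the
excesses of the n - p remaining coordinates over the minimum, rescaled so that their
maximum equals their sum. This homeomorphism sends the points of F lying in \<partial>\<Delta> or in
some \<Delta>_m with m \<notin> J to the boundary of the cube, so restriction to F is a *-homomorphism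
from B_J onto the iterated suspension of \<Inter>j\<in>J. I_j; surjectivity uses a cutoff that
extends functions from F into the simplex. Restriction is isometric for the quotient norm:
modulo the kernel, f agrees with its product by a function of the distance to F that is 1
on F and vanishes on the compact set where |f| \<ge> \<parallel>f|F\<parallel> + \<epsilon>, a set that misses F.
\<close>

lemma continuous_on_coordinate [continuous_intros]:
  "continuous_on S (\<lambda>x::'i \<Rightarrow> 'b::topological_space. x i)"
  by (rule continuous_on_subset[OF continuous_on_product_coordinates]) simp

lemma continuous_on_Min_image:
  fixes f :: "'i \<Rightarrow> 'b::topological_space \<Rightarrow> 'c::linorder_topology"
  assumes "finite J" "J \<noteq> {}" "\<And>j. continuous_on S (f j)"
  shows "continuous_on S (\<lambda>x. Min ((\<lambda>j. f j x) ` J))"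
  using assms(1,2)
proof (induction J rule: finite_ne_induct)
  case (singleton j) then show ?case using assms(3) by simp
next
  case (insert j F)
  then have "(\<lambda>x. Min ((\<lambda>j. f j x) ` insert j F)) = (\<lambda>x. min (f j x) (Min ((\<lambda>j. f j x) ` F)))"
    by (simp add: Min_insert)
  then show ?case by (simp only:) (rule continuous_on_min[OF assms(3) insert.IH])
qed

lemma continuous_on_Max_image:
  fixes f :: "'i \<Rightarrow> 'b::topological_space \<Rightarrow> 'c::linorder_topology"
  assumes "finite J" "J \<noteq> {}" "\<And>j. continuous_on S (f j)"
  shows "continuous_on S (\<lambda>x. Max ((\<lambda>j. f j x) ` J))"
  using assms(1,2)
proof (induction J rule: finite_ne_induct)
  case (singleton j) then show ?case using assms(3) by simp
next
  case (insert j F)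
  then have "(\<lambda>x. Max ((\<lambda>j. f j x) ` insert j F)) = (\<lambda>x. max (f j x) (Max ((\<lambda>j. f j x) ` F)))"
    by (simp add: Max_insert)
  then show ?case by (simp only:) (rule continuous_on_max[OF assms(3) insert.IH])
qed

lemma continuous_on_scaleR_vanishing:
  fixes f :: "'b::metric_space \<Rightarrow> 'c::real_normed_vector" and g :: "'b \<Rightarrow> real"
  assumes f: "continuous_on S f" and g: "continuous_on S g"
    and vanish: "\<forall>x\<in>S. g x = 0 \<longrightarrow> f x = 0"
    and w: "continuous_on {x\<in>S. g x \<noteq> 0} w" and w_bound: "\<forall>x\<in>S. \<bar>w x\<bar> \<le> 1"
  shows "continuous_on S (\<lambda>x. w x *\<^sub>R f x)"
  unfolding continuous_on_def
proof (intro ballI)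
  fix x assume x: "x \<in> S"
  show "((\<lambda>x. w x *\<^sub>R f x) \<longlongrightarrow> w x *\<^sub>R f x) (at x within S)"
  proof (cases "g x = 0")
    case True
    then have fx: "f x = 0" using vanish x by auto
    then have "((\<lambda>y. norm (f y)) \<longlongrightarrow> 0) (at x within S)"
      using f x by (metis continuous_on_def tendsto_norm_zero)
    moreover have "\<forall>\<^sub>F y in at x within S. norm (w y *\<^sub>R f y) \<le> norm (f y)"
      using w_bound by (auto simp: eventually_at_filter mult_left_le_one_le)
    ultimately have "((\<lambda>y. w y *\<^sub>R f y) \<longlongrightarrow> 0) (at x within S)"
      by (rule Lim_null_comparison[rotated])
    then show ?thesis using fx by simp
  next
    case False
    have "openin (top_of_set S) (S \<inter> g -` (-{0}))"
      by (rule continuous_openin_preimage_gen[OF g]) auto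
    moreover have "S \<inter> g -` (-{0}) = {x\<in>S. g x \<noteq> 0}" by auto
    ultimately obtain U where U: "open U" "{x\<in>S. g x \<noteq> 0} = S \<inter> U"
      by (auto simp: openin_open)
    then have "at x within S = at x within {x\<in>S. g x \<noteq> 0}"
      using x False by (intro at_within_nhd[where S=U]) auto
    moreover have "continuous_on {x\<in>S. g x \<noteq> 0} (\<lambda>x. w x *\<^sub>R f x)"
      by (intro continuous_on_scaleR w continuous_on_subset[OF f]) auto
    ultimately show ?thesis using x False by (auto simp: continuous_on_def)
  qed
qed

lemma abs_divide_le_one: "0 \<le> (a::real) \<Longrightarrow> a \<le> b \<Longrightarrow> \<bar>a / b\<bar> \<le> 1"
  by (cases "b = 0") (auto simp: divide_le_eq_1)

lemma bdd_above_norm_compact_support: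
  fixes h :: "'b::topological_space \<Rightarrow> 'c::real_normed_vector"
  assumes "compact S" "continuous_on S h" "\<forall>x. x \<notin> S \<longrightarrow> h x = 0"
  shows "bdd_above (range (\<lambda>x. norm (h x)))"
proof -
  obtain B where "\<forall>y\<in>h ` S. norm y \<le> B"
    using assms compact_continuous_image compact_imp_bounded bounded_iff by metis
  then have "norm (h x) \<le> max B 0" for x
    using assms(3) by (cases "x \<in> S") force+
  then show ?thesis by (auto intro!: bdd_aboveI)
qed

lemma supnorm_upper: "bdd_above (range (\<lambda>x. norm (h x))) \<Longrightarrow> norm (h x) \<le> supnorm h"
  unfolding supnorm_def by (rule cSUP_upper) auto

lemma supnorm_nonneg: "bdd_above (range (\<lambda>x. norm (h x))) \<Longrightarrow> 0 \<le> supnorm h"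
  by (rule order_trans[OF norm_ge_zero supnorm_upper])

lemma supnorm_least: "(\<And>x. norm (h x) \<le> B) \<Longrightarrow> supnorm h \<le> B"
  unfolding supnorm_def by (rule cSUP_least) auto

lemma adj_zero: "adj 0 = (0::'a::cstar_algebra)"
  using adj_add[of "0::'a" 0] by simp

lemma scaleC_zero: "scaleC c 0 = (0::'a::cstar_algebra)"
  using scaleC_add_right[of c "0::'a" 0] by simp

lemma cstar_ideal_zero: "cstar_ideal I \<Longrightarrow> 0 \<in> I"
  by (simp add: cstar_ideal_def)

lemma cstar_ideal_add: "cstar_ideal I \<Longrightarrow> x \<in> I \<Longrightarrow> y \<in> I \<Longrightarrow> x + y \<in> I"
  by (simp add: cstar_ideal_def)

lemma cstar_ideal_scaleR: "cstar_ideal I \<Longrightarrow> x \<in> I \<Longrightarrow> r *\<^sub>R x \<in> I"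
  by (simp add: cstar_ideal_def scaleR_scaleC)

lemma cstar_ideal_diff: "cstar_ideal I \<Longrightarrow> x \<in> I \<Longrightarrow> y \<in> I \<Longrightarrow> x - y \<in> I"
  using cstar_ideal_add[of I x "(-1) *\<^sub>R y"] cstar_ideal_scaleR[of I y "-1"] by simp

lemma stdsimplex_nonneg: "x \<in> stdsimplex n \<Longrightarrow> 0 \<le> x i"
  by (simp add: stdsimplex_def)

lemma stdsimplex_le_one: "x \<in> stdsimplex n \<Longrightarrow> x i \<le> 1"
proof (cases "i \<le> n")
  case True
  assume x: "x \<in> stdsimplex n"
  then have "x i \<le> (\<Sum>i\<le>n. x i)"
    using True by (intro member_le_sum) (auto simp: stdsimplex_def)
  then show ?thesis using x by (simp add: stdsimplex_def)
qed (simp add: stdsimplex_def)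

lemma closed_stdsimplex: "closed (stdsimplex n)"
proof -
  have "stdsimplex n = (\<Inter>i. {x. 0 \<le> x i}) \<inter> (\<Inter>i\<in>{n<..}. {x. x i = 0}) \<inter> {x. (\<Sum>i\<le>n. x i) = 1}"
    unfolding stdsimplex_def by auto
  moreover have "closed (\<Inter>i. {x::nat\<Rightarrow>real. 0 \<le> x i})"
    by (intro closed_INT ballI closed_Collect_le continuous_on_const continuous_on_coordinate)
  moreover have "closed (\<Inter>i\<in>{n<..}. {x::nat\<Rightarrow>real. x i = 0})"
    by (intro closed_INT ballI closed_Collect_eq continuous_on_const continuous_on_coordinate)
  moreover have "closed {x::nat\<Rightarrow>real. (\<Sum>i\<le>n. x i) = 1}"
    by (intro closed_Collect_eq continuous_on_sum continuous_on_const continuous_on_coordinate)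
  ultimately show ?thesis by (metis closed_Int)
qed

lemma compact_stdsimplex: "compact (stdsimplex n)"
proof -
  have "compact (PiE UNIV (\<lambda>_::nat. {0..1::real}))"
    using compactin_PiE[of "\<lambda>_. euclidean" UNIV "\<lambda>_. {0..1::real}"]
    by (simp add: euclidean_product_topology)
  moreover have "stdsimplex n \<subseteq> PiE UNIV (\<lambda>_::nat. {0..1::real})"
    using stdsimplex_nonneg stdsimplex_le_one by (auto simp: PiE_def)
  ultimately show ?thesis using closed_Int_compact[OF closed_stdsimplex] by (metis Int_absorb2)
qed

lemma Balg_bdd_above_norm: "f \<in> Balg n I \<Longrightarrow> bdd_above (range (\<lambda>x. norm (f x)))"
  by (rule bdd_above_norm_compact_support[OF compact_stdsimplex]) (auto simp: Balg_def)

lemma BalgJ_bdd_above_norm: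
  assumes "f \<in> BalgJ n I L" shows "bdd_above (range (\<lambda>x. norm (f x)))"
  using Balg_bdd_above_norm[of f n I] assms by (simp add: BalgJ_def)

context
  fixes I :: "nat \<Rightarrow> 'a::cstar_algebra set" and n :: nat
  assumes ideals: "\<forall>j\<le>n. cstar_ideal (I j)"
begin

lemma BalgJ_zero: "(\<lambda>x. 0) \<in> BalgJ n I L"
  using ideals unfolding BalgJ_def Balg_def by (auto intro: cstar_ideal_zero)

lemma BalgJ_add: "f \<in> BalgJ n I L \<Longrightarrow> g \<in> BalgJ n I L \<Longrightarrow> (\<lambda>x. f x + g x) \<in> BalgJ n I L"
  using ideals unfolding BalgJ_def Balg_def by (auto intro: cstar_ideal_add continuous_on_add)

lemma BalgJ_diff: "f \<in> BalgJ n I L \<Longrightarrow> g \<in> BalgJ n I L \<Longrightarrow> (\<lambda>x. f x - g x) \<in> BalgJ n I L"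
  using ideals unfolding BalgJ_def Balg_def by (auto intro: cstar_ideal_diff continuous_on_diff)

lemma BalgJ_scaleR_function:
  assumes "h \<in> Balg n I" and "continuous_on (stdsimplex n) (\<lambda>x. c x *\<^sub>R h x)"
    and "\<forall>j'\<le>n. j' \<notin> L \<longrightarrow> (\<forall>x\<in>stdsimplex_part n j'. c x *\<^sub>R h x = 0)"
  shows "(\<lambda>x. c x *\<^sub>R h x) \<in> BalgJ n I L"
  using assms ideals unfolding BalgJ_def Balg_def by (auto intro: cstar_ideal_scaleR)

end

lemma quot_cstar_iso_via_hom:
  fixes R :: "('b \<Rightarrow> 'a::cstar_algebra) \<Rightarrow> 'c \<Rightarrow> 'a"
  assumes zero: "(\<lambda>_. 0) \<in> K"
    and kernel: "\<And>k. k \<in> K \<Longrightarrow> R k = (\<lambda>_. 0)"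
    and image: "R ` X = Y"
    and injective: "\<And>f g. f \<in> X \<Longrightarrow> g \<in> X \<Longrightarrow> R f = R g \<Longrightarrow> coset K f = coset K g"
    and add: "\<And>f g. R (fadd f g) = fadd (R f) (R g)"
    and mul: "\<And>f g. R (fmul f g) = fmul (R f) (R g)"
    and scale: "\<And>c f. R (fscale c f) = fscale c (R f)"
    and adjoint: "\<And>f. R (fadj f) = fadj (R f)"
    and norm: "\<And>f. f \<in> X \<Longrightarrow> supnorm (R f) = quot_norm K f"
  shows "quot_cstar_iso X K Y"
proof -
  define \<Psi> where "\<Psi> C = R (SOME f. C = coset K f)" for C
  have \<Psi>_coset: "\<Psi> (coset K f) = R f" for f
  proof -
    define f' where "f' = (SOME f'. coset K f = coset K f')"
    have "coset K f = coset K f'" unfolding f'_def by (rule someI[of _ f]) simp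
    moreover have "f' \<in> coset K f'"
      using zero unfolding coset_def by (auto simp: fadd_def intro!: exI[of _ "\<lambda>_. 0"])
    ultimately obtain k where "k \<in> K" "f' = fadd f k" unfolding coset_def by auto
    then have "R f' = R f" using add kernel by (simp add: fadd_def)
    then show ?thesis unfolding \<Psi>_def f'_def by simp
  qed
  have "inj_on \<Psi> (coset K ` X)"
  proof (rule inj_onI)
    fix C D assume "C \<in> coset K ` X" "D \<in> coset K ` X" "\<Psi> C = \<Psi> D"
    then obtain f g where "f \<in> X" "g \<in> X" "C = coset K f" "D = coset K g" "R f = R g"
      by (auto simp: \<Psi>_coset)
    then show "C = D" using injective by blast
  qed
  moreover have "\<Psi> ` (coset K ` X) = Y"
    using image by (simp add: image_image \<Psi>_coset)
  ultimately have "bij_betw \<Psi> (coset K ` X) Y" by (simp add: bij_betw_def)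
  then show ?thesis unfolding quot_cstar_iso_def
    by (intro exI[of _ \<Psi>]) (simp add: \<Psi>_coset add mul scale adjoint norm)
qed

section \<open>The face and the kernel of restriction to it\<close>

text \<open>The map e numbers the vertices outside J; they index the coordinates of the cube.\<close>
locale simplex_face =
  fixes I :: "nat \<Rightarrow> 'a::cstar_algebra set" and n p :: nat and J :: "nat set"
    and e :: "nat \<Rightarrow> nat"
  assumes ideals: "\<forall>j\<le>n. cstar_ideal (I j)"
    and p_le: "p \<le> n" and J_sub: "J \<subseteq> {..n}" and J_card: "card J = p + 1"
    and e_bij: "bij_betw e {..<n-p} ({..n} - J)"
begin

abbreviation "k \<equiv> n - p"

definition Jmin :: "(nat \<Rightarrow> real) \<Rightarrow> real" where "Jmin x = Min ((\<lambda>j. x j) ` J)"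

definition face :: "(nat \<Rightarrow> real) set" where
  "face = {x \<in> stdsimplex n. \<forall>j\<in>J. x \<in> stdsimplex_part n j}"

definition e_inv :: "nat \<Rightarrow> nat" where "e_inv m = inv_into {..<k} e m"

lemma finite_J: "finite J" using J_sub finite_subset by blast

lemma J_nonempty: "J \<noteq> {}" using J_card by auto

lemma J_le: "j \<in> J \<Longrightarrow> j \<le> n" using J_sub by auto

lemma e_mem: "i < k \<Longrightarrow> e i \<le> n \<and> e i \<notin> J"
  using e_bij by (auto simp: bij_betw_def)

lemma e_inv_mem: "m \<le> n \<Longrightarrow> m \<notin> J \<Longrightarrow> e_inv m < k \<and> e (e_inv m) = m"
proof -
  assume "m \<le> n" "m \<notin> J"
  then have "m \<in> e ` {..<k}" using e_bij by (auto simp: bij_betw_def)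
  then show ?thesis unfolding e_inv_def
    using inv_into_into[of m e "{..<k}"] f_inv_into_f[of m e "{..<k}"] by auto
qed

lemma e_inv_e: "i < k \<Longrightarrow> e_inv (e i) = i"
  unfolding e_inv_def using e_bij by (auto simp: bij_betw_def intro: inv_into_f_f)

lemma sum_atMost_split: "(\<Sum>m\<le>n. y m) = (\<Sum>j\<in>J. y j) + (\<Sum>i<k. y (e i))"
proof -
  have "(\<Sum>m\<le>n. y m) = (\<Sum>j\<in>J. y j) + (\<Sum>m\<in>{..n} - J. y m)"
    using J_sub finite_J by (metis finite_atMost sum.subset_diff add.commute)
  also have "(\<Sum>m\<in>{..n} - J. y m) = (\<Sum>i<k. y (e i))"
    using sum.reindex_bij_betw[OF e_bij, of y] by simp
  finally show ?thesis .
qed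

lemma Jmin_le: "j \<in> J \<Longrightarrow> Jmin x \<le> x j"
  unfolding Jmin_def using finite_J by (auto intro: Min_le)

lemma Jmin_attained: "\<exists>j\<in>J. Jmin x = x j"
proof -
  have "Jmin x \<in> (\<lambda>j. x j) ` J" unfolding Jmin_def using finite_J J_nonempty by (intro Min_in) auto
  then show ?thesis by auto
qed

lemma Jmin_nonneg: "x \<in> stdsimplex n \<Longrightarrow> 0 \<le> Jmin x"
  using Jmin_attained stdsimplex_nonneg by metis

lemma Jmin_eqI: "\<forall>j\<in>J. x j = c \<Longrightarrow> Jmin x = c"
  using Jmin_attained by metis

lemma continuous_on_Jmin: "continuous_on S Jmin"
  unfolding Jmin_def[abs_def]
  by (rule continuous_on_Min_image[OF finite_J J_nonempty continuous_on_coordinate])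

lemma face_iff: "x \<in> face \<longleftrightarrow> x \<in> stdsimplex n \<and> (\<forall>j\<in>J. x j = Jmin x) \<and> (\<forall>m\<le>n. Jmin x \<le> x m)"
proof
  assume x: "x \<in> face"
  obtain j0 where j0: "j0 \<in> J" "Jmin x = x j0" using Jmin_attained by blast
  have le: "x j \<le> x m" if "j \<in> J" "m \<le> n" for j m
    using x that unfolding face_def stdsimplex_part_def by auto
  show "x \<in> stdsimplex n \<and> (\<forall>j\<in>J. x j = Jmin x) \<and> (\<forall>m\<le>n. Jmin x \<le> x m)"
    using x le[of j0] le[of _ j0] j0 J_le Jmin_le[of _ x] by (force simp: face_def)
next
  assume "x \<in> stdsimplex n \<and> (\<forall>j\<in>J. x j = Jmin x) \<and> (\<forall>m\<le>n. Jmin x \<le> x m)"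
  then show "x \<in> face" unfolding face_def stdsimplex_part_def by auto
qed

lemma face_subset_stdsimplex: "x \<in> face \<Longrightarrow> x \<in> stdsimplex n"
  by (simp add: face_def)

lemma Qalg_vanishes_on_face:
  assumes h: "h \<in> Qalg n I (int p - 1)" and x: "x \<in> face"
  shows "h x = 0"
proof -
  obtain g where g: "\<forall>L. L \<subseteq> {..n} \<and> int (card L) \<le> int p - 1 + 1 \<longrightarrow> g L \<in> BalgJ n I L"
    and hg: "h = (\<lambda>x. \<Sum>L\<in>{L. L \<subseteq> {..n} \<and> int (card L) \<le> int p - 1 + 1}. g L x)"
    using h unfolding Qalg_def by blast
  have "g L x = 0" if L: "L \<subseteq> {..n}" "int (card L) \<le> int p - 1 + 1" for L
  proof -
    have "\<not> J \<subseteq> L"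
      using L J_card card_mono[of L J] finite_subset[of L "{..n}"] by auto
    then obtain j where j: "j \<in> J" "j \<notin> L" by blast
    then have "x \<in> stdsimplex_part n j" using x unfolding face_def by blast
    then show ?thesis using g L j J_le unfolding BalgJ_def by blast
  qed
  then show ?thesis unfolding hg by simp
qed

definition spread :: "(nat \<Rightarrow> real) \<Rightarrow> real" where "spread x = (\<Sum>j\<in>J. x j - Jmin x)"

definition weight :: "nat \<Rightarrow> (nat \<Rightarrow> real) \<Rightarrow> real" where
  "weight j x = (x j - Jmin x) / spread x"

lemma continuous_on_spread: "continuous_on S spread"
  unfolding spread_def[abs_def]
  by (intro continuous_on_sum continuous_on_diff continuous_on_coordinate continuous_on_Jmin)

lemma continuous_on_weight: "continuous_on {x\<in>S. spread x \<noteq> 0} (weight j)"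
  unfolding weight_def[abs_def]
  by (intro continuous_on_divide continuous_on_diff continuous_on_coordinate continuous_on_Jmin
      continuous_on_spread) auto

lemma spread_term_bounds: "j \<in> J \<Longrightarrow> 0 \<le> x j - Jmin x \<and> x j - Jmin x \<le> spread x"
  using Jmin_le finite_J by (auto simp: spread_def intro: member_le_sum)

lemma spread_nonneg: "0 \<le> spread x"
  unfolding spread_def using spread_term_bounds by (intro sum_nonneg) auto

lemma spread_eq_0_iff: "spread x = 0 \<longleftrightarrow> (\<forall>j\<in>J. x j = Jmin x)"
  unfolding spread_def using sum_nonneg_eq_0_iff[OF finite_J, of "\<lambda>j. x j - Jmin x"]
    spread_term_bounds[of _ x] by auto

lemma abs_weight_le_one: "j \<in> J \<Longrightarrow> \<bar>weight j x\<bar> \<le> 1"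
  using spread_term_bounds[of j x] abs_divide_le_one by (simp add: weight_def)

lemma sum_weight: "spread x \<noteq> 0 \<Longrightarrow> (\<Sum>j\<in>J. weight j x) = 1"
  unfolding weight_def by (simp add: sum_divide_distrib[symmetric] spread_def)

text \<open>Where the spread vanishes, some \<Delta>_m with m \<notin> J contains x unless x lies on the face.\<close>
lemma BalgJ_vanishes_where_spread_0:
  assumes h: "h \<in> BalgJ n I J" and h_face: "\<forall>y\<in>face. h y = 0"
    and x: "x \<in> stdsimplex n" and spread: "spread x = 0"
  shows "h x = 0"
proof (cases "\<forall>m\<le>n. Jmin x \<le> x m")
  case True
  then have "x \<in> face" using spread x by (simp add: face_iff spread_eq_0_iff)
  then show ?thesis using h_face by blast
next
  case False
  have "Min ((\<lambda>m. x m) ` {..n}) \<in> (\<lambda>m. x m) ` {..n}" by (intro Min_in) auto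
  then obtain m0 where m0: "m0 \<le> n" "x m0 = Min ((\<lambda>m. x m) ` {..n})"
    by (metis (no_types, lifting) atMost_iff imageE)
  have le: "x m0 \<le> x i" if "i \<le> n" for i using m0 that by simp
  then have "m0 \<notin> J" using False spread Jmin_le by (force simp: spread_eq_0_iff)
  moreover have "x \<in> stdsimplex_part n m0" using x le unfolding stdsimplex_part_def by auto
  ultimately show ?thesis using h m0 unfolding BalgJ_def by blast
qed

lemma weight_scaleR_in_BalgJ_remove:
  assumes h: "h \<in> BalgJ n I J" and h_face: "\<forall>y\<in>face. h y = 0" and j: "j \<in> J"
  shows "(\<lambda>x. weight j x *\<^sub>R h x) \<in> BalgJ n I (J - {j})"
proof (rule BalgJ_scaleR_function[OF ideals])
  show hB: "h \<in> Balg n I" using h by (simp add: BalgJ_def)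
  show "continuous_on (stdsimplex n) (\<lambda>x. weight j x *\<^sub>R h x)"
    using hB BalgJ_vanishes_where_spread_0[OF h h_face] abs_weight_le_one[OF j]
    by (intro continuous_on_scaleR_vanishing[OF _ continuous_on_spread _ continuous_on_weight])
      (auto simp: Balg_def)
  show "\<forall>j'\<le>n. j' \<notin> J - {j} \<longrightarrow> (\<forall>x\<in>stdsimplex_part n j'. weight j x *\<^sub>R h x = 0)"
  proof (intro allI impI ballI)
    fix j' x assume j': "j' \<le> n" "j' \<notin> J - {j}" and x: "x \<in> stdsimplex_part n j'"
    show "weight j x *\<^sub>R h x = 0"
    proof (cases "j' = j")
      case True
      obtain j1 where "j1 \<in> J" "Jmin x = x j1" using Jmin_attained by blast
      then have "x j = Jmin x"
        using x True J_le Jmin_le[OF j, of x] by (force simp: stdsimplex_part_def)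
      then show ?thesis by (simp add: weight_def)
    next
      case False
      then show ?thesis using h j' x unfolding BalgJ_def by auto
    qed
  qed
qed

lemma sum_weight_scaleR:
  assumes h: "h \<in> BalgJ n I J" and h_face: "\<forall>y\<in>face. h y = 0"
  shows "(\<Sum>j\<in>J. weight j x *\<^sub>R h x) = h x"
proof -
  have "h x = 0" if "x \<notin> stdsimplex n \<or> spread x = 0"
    using that h BalgJ_vanishes_where_spread_0[OF h h_face] by (auto simp: BalgJ_def Balg_def)
  then show ?thesis
    using sum_weight[of x] by (cases "x \<in> stdsimplex n \<and> spread x \<noteq> 0") (auto simp: scaleR_sum_left[symmetric])
qed

lemma BalgJ_vanishing_on_face_in_Qalg:
  assumes h: "h \<in> BalgJ n I J" and h_face: "\<forall>y\<in>face. h y = 0"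
  shows "h \<in> Qalg n I (int p - 1)"
proof -
  define LL where "LL = {L. L \<subseteq> {..n} \<and> int (card L) \<le> int p - 1 + 1}"
  define g where "g L = (\<lambda>x. \<Sum>j\<in>{j\<in>J. J - {j} = L}. weight j x *\<^sub>R h x)" for L
  have "g L \<in> BalgJ n I L" for L
  proof (cases "\<exists>j\<in>J. L = J - {j}")
    case True
    then obtain j0 where j0: "j0 \<in> J" "L = J - {j0}" by blast
    then have "{j\<in>J. J - {j} = L} = {j0}" by auto
    then show ?thesis using weight_scaleR_in_BalgJ_remove[OF h h_face j0(1)] j0(2) by (simp add: g_def)
  next
    case False
    then have "{j\<in>J. J - {j} = L} = {}" by blast
    then have "g L = (\<lambda>x. 0)" unfolding g_def by (simp only: sum.empty)
    then show ?thesis using BalgJ_zero[OF ideals] by simp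
  qed
  moreover have "h = (\<lambda>x. \<Sum>L\<in>LL. g L x)"
  proof
    fix x
    have "finite LL" unfolding LL_def by (rule finite_subset[of _ "Pow {..n}"]) auto
    moreover have "(\<lambda>j. J - {j}) ` J \<subseteq> LL"
      unfolding LL_def using J_sub J_card finite_J by (auto simp: card_Diff_singleton)
    ultimately have "(\<Sum>L\<in>LL. g L x) = (\<Sum>j\<in>J. weight j x *\<^sub>R h x)"
      unfolding g_def by (rule sum.group[OF finite_J])
    then show "h x = (\<Sum>L\<in>LL. g L x)" using sum_weight_scaleR[OF h h_face] by simp
  qed
  ultimately show ?thesis unfolding Qalg_def LL_def by blast
qed

definition kernel :: "((nat \<Rightarrow> real) \<Rightarrow> 'a) set" where
  "kernel = BalgJ n I J \<inter> Qalg n I (int p - 1)"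

lemma kernel_eq: "kernel = {h \<in> BalgJ n I J. \<forall>x\<in>face. h x = 0}"
  unfolding kernel_def using Qalg_vanishes_on_face BalgJ_vanishing_on_face_in_Qalg by blast

lemma zero_in_kernel: "(\<lambda>x. 0) \<in> kernel"
  using BalgJ_zero[OF ideals] kernel_eq by auto

section \<open>The face as a cube\<close>

text \<open>Including the index k, at which all vectors considered below vanish, makes cmax
  nonnegative also for k = 0.\<close>
definition cmax :: "(nat \<Rightarrow> real) \<Rightarrow> real" where "cmax u = Max ((\<lambda>i. u i) ` {..k})"

definition csum :: "(nat \<Rightarrow> real) \<Rightarrow> real" where "csum u = (\<Sum>i<k. u i)"

lemma cmax_ge: "i \<le> k \<Longrightarrow> u i \<le> cmax u"
  unfolding cmax_def by (intro Max_ge) auto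

lemma cmax_attained: "\<exists>i\<le>k. cmax u = u i"
proof -
  have "cmax u \<in> (\<lambda>i. u i) ` {..k}" unfolding cmax_def by (intro Max_in) auto
  then show ?thesis by auto
qed

lemma cmax_scale: "0 \<le> c \<Longrightarrow> cmax (\<lambda>i. c * u i) = c * cmax u"
proof -
  assume "0 \<le> c"
  then have "mono ((*) c)" by (simp add: mono_def mult_left_mono)
  then have "c * Max ((\<lambda>i. u i) ` {..k}) = Max ((*) c ` ((\<lambda>i. u i) ` {..k}))"
    by (intro mono_Max_commute) auto
  then show ?thesis unfolding cmax_def by (simp add: image_image)
qed

lemma csum_scale: "csum (\<lambda>i. c * u i) = c * csum u"
  by (simp add: csum_def sum_distrib_left)

lemma continuous_on_cmax: "continuous_on S cmax"
  unfolding cmax_def[abs_def]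
  by (rule continuous_on_Max_image[where f = "\<lambda>i u. u i"]) (auto intro: continuous_on_coordinate)

lemma continuous_on_csum: "continuous_on S csum"
  unfolding csum_def[abs_def] by (intro continuous_on_sum continuous_on_coordinate)

context
  fixes u :: "nat \<Rightarrow> real"
  assumes nonneg: "\<forall>i. 0 \<le> u i" and support: "\<forall>i\<ge>k. u i = 0"
begin

lemma csum_ge: "i < k \<Longrightarrow> u i \<le> csum u"
  unfolding csum_def using nonneg by (intro member_le_sum) auto

lemma cmax_nonneg: "0 \<le> cmax u"
  using cmax_ge[of k u] nonneg[rule_format, of k] by linarith

lemma csum_nonneg: "0 \<le> csum u"
  unfolding csum_def using nonneg by (simp add: sum_nonneg)

lemma vanishes_iff_below_k: "(\<forall>i<k. u i = 0) \<longleftrightarrow> (\<forall>i. u i = 0)"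
  using support not_less by blast

lemma csum_eq_0_iff: "csum u = 0 \<longleftrightarrow> (\<forall>i. u i = 0)"
  unfolding csum_def vanishes_iff_below_k[symmetric] using nonneg by (auto simp: sum_nonneg_eq_0_iff)

lemma cmax_eq_0_iff: "cmax u = 0 \<longleftrightarrow> (\<forall>i. u i = 0)"
proof
  assume "cmax u = 0"
  then have "u i \<le> 0" if "i < k" for i using cmax_ge[of i u] that by simp
  then show "\<forall>i. u i = 0" unfolding vanishes_iff_below_k[symmetric] using nonneg by (simp add: order_antisym)
next
  assume "\<forall>i. u i = 0"
  then show "cmax u = 0" using cmax_attained[of u] by auto
qed

end

lemma unitcube_nonneg: "u \<in> unitcube k \<Longrightarrow> 0 \<le> u i"
  by (cases "i < k") (auto simp: unitcube_def)

lemma unitcube_le_one: "u \<in> unitcube k \<Longrightarrow> u i \<le> 1"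
  by (cases "i < k") (auto simp: unitcube_def)

lemma unitcube_eq_0: "u \<in> unitcube k \<Longrightarrow> k \<le> i \<Longrightarrow> u i = 0"
  by (auto simp: unitcube_def)

lemma cmax_le_one: "u \<in> unitcube k \<Longrightarrow> cmax u \<le> 1"
  using cmax_attained[of u] unitcube_le_one by metis

lemma cmax_eq_1_boundary: "u \<in> unitcube k \<Longrightarrow> cmax u = 1 \<Longrightarrow> u \<in> unitcube_bdry k"
proof -
  assume u: "u \<in> unitcube k" "cmax u = 1"
  obtain i where i: "i \<le> k" "cmax u = u i" using cmax_attained by blast
  have "i < k" using i u unitcube_eq_0[of u i] by (cases "i = k") auto
  then show ?thesis using u i unfolding unitcube_bdry_def by auto
qed

text \<open>The J-coordinates of param u all equal the minimum (1 - cmax u) / (n + 1); the excesses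
  of the others over it are u rescaled to sum cmax u, so that the coordinates add up to 1.\<close>
definition param :: "(nat \<Rightarrow> real) \<Rightarrow> nat \<Rightarrow> real" where
  "param u = (\<lambda>m. if m \<in> J then (1 - cmax u) / real (n+1)
     else if m \<le> n then (1 - cmax u) / real (n+1) + (u (e_inv m) / csum u) * cmax u else 0)"

definition excess :: "(nat \<Rightarrow> real) \<Rightarrow> nat \<Rightarrow> real" where
  "excess x i = (if i < k then max 0 (x (e i) - Jmin x) else 0)"

definition coord :: "(nat \<Rightarrow> real) \<Rightarrow> nat \<Rightarrow> real" where
  "coord x = (\<lambda>i. (excess x i / cmax (excess x)) * csum (excess x))"

lemma excess_nonneg: "\<forall>i. 0 \<le> excess x i"
  by (simp add: excess_def)

lemma excess_support: "\<forall>i\<ge>k. excess x i = 0"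
  by (simp add: excess_def)

lemmas excess_vector = excess_nonneg excess_support

lemma unitcube_vector: "u \<in> unitcube k \<Longrightarrow> \<forall>i. 0 \<le> u i" "u \<in> unitcube k \<Longrightarrow> \<forall>i\<ge>k. u i = 0"
  by (auto intro: unitcube_nonneg unitcube_eq_0)

lemma Jmin_param: "Jmin (param u) = (1 - cmax u) / real (n+1)"
  by (rule Jmin_eqI) (simp add: param_def)

lemma sum_param: "u \<in> unitcube k \<Longrightarrow> (\<Sum>m\<le>n. param u m) = 1"
proof -
  assume u: "u \<in> unitcube k"
  define \<tau> where "\<tau> = (1 - cmax u) / real (n+1)"
  have "(\<Sum>m\<le>n. param u m) = (\<Sum>j\<in>J. param u j) + (\<Sum>i<k. param u (e i))"
    by (rule sum_atMost_split)
  also have "(\<Sum>j\<in>J. param u j) = real (p+1) * \<tau>" using J_card by (simp add: param_def \<tau>_def)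
  also have "(\<Sum>i<k. param u (e i)) = (\<Sum>i<k. \<tau> + (u i / csum u) * cmax u)"
    by (rule sum.cong) (use e_mem e_inv_e in \<open>auto simp: param_def \<tau>_def\<close>)
  also have "\<dots> = real k * \<tau> + (csum u / csum u) * cmax u"
    by (simp add: sum.distrib csum_def sum_divide_distrib[symmetric] sum_distrib_right[symmetric])
  also have "(csum u / csum u) * cmax u = cmax u"
  proof -
    have "csum u = 0 \<Longrightarrow> cmax u = 0"
      using csum_eq_0_iff[OF unitcube_vector[OF u]] cmax_eq_0_iff[OF unitcube_vector[OF u]] by blast
    then show ?thesis by (cases "csum u = 0") auto
  qed
  finally have "(\<Sum>m\<le>n. param u m) = real (p+1) * \<tau> + (real k * \<tau> + cmax u)" .
  also have "\<dots> = real (n+1) * \<tau> + cmax u" using p_le by (simp add: algebra_simps)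
  also have "\<dots> = 1" unfolding \<tau>_def by simp
  finally show ?thesis .
qed

lemma param_in_face: "u \<in> unitcube k \<Longrightarrow> param u \<in> face"
proof -
  assume u: "u \<in> unitcube k"
  define \<tau> where "\<tau> = (1 - cmax u) / real (n+1)"
  have "0 \<le> \<tau>" using cmax_le_one[OF u] by (simp add: \<tau>_def)
  have ge: "\<tau> \<le> param u m" if "m \<le> n" for m
  proof -
    have "0 \<le> u (e_inv m) / csum u * cmax u"
      using u by (intro mult_nonneg_nonneg divide_nonneg_nonneg unitcube_nonneg
          csum_nonneg cmax_nonneg unitcube_vector)
    then show ?thesis using that by (simp add: param_def \<tau>_def)
  qed
  have "param u \<in> stdsimplex n"
    unfolding stdsimplex_def
    using ge \<open>0 \<le> \<tau>\<close> sum_param[OF u] J_le by (force simp: param_def)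
  moreover have "\<forall>j\<in>J. param u j = \<tau>" by (simp add: param_def \<tau>_def)
  ultimately show ?thesis unfolding face_iff Jmin_param \<tau>_def[symmetric] using ge by simp
qed

lemma excess_param:
  assumes u: "u \<in> unitcube k"
  shows "excess (param u) = (\<lambda>i. (cmax u / csum u) * u i)"
proof
  fix i
  have "0 \<le> u i * cmax u / csum u"
    using u by (intro mult_nonneg_nonneg divide_nonneg_nonneg cmax_nonneg csum_nonneg
        unitcube_vector unitcube_nonneg)
  then show "excess (param u) i = (cmax u / csum u) * u i"
    unfolding excess_def Jmin_param using e_mem[of i] e_inv_e[of i] unitcube_eq_0[OF u, of i]
    by (cases "i < k") (simp_all add: param_def)
qed

lemma coord_param: "u \<in> unitcube k \<Longrightarrow> coord (param u) = u"
proof -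
  assume u: "u \<in> unitcube k"
  define c where "c = cmax u / csum u"
  show ?thesis
  proof (cases "\<forall>i. u i = 0")
    case True
    then show ?thesis by (simp add: coord_def excess_param[OF u] fun_eq_iff)
  next
    case False
    then have "csum u \<noteq> 0" "cmax u \<noteq> 0"
      using csum_eq_0_iff[OF unitcube_vector[OF u]] cmax_eq_0_iff[OF unitcube_vector[OF u]] by auto
    then have "0 < csum u" "0 < cmax u"
      using csum_nonneg[OF unitcube_vector[OF u]] cmax_nonneg[OF unitcube_vector[OF u]] by auto
    then have "0 < c" "c * csum u = cmax u" by (simp_all add: c_def)
    moreover have "excess (param u) = (\<lambda>i. c * u i)" by (simp add: excess_param[OF u] c_def)
    ultimately show ?thesis
      using \<open>0 < cmax u\<close> by (simp add: coord_def cmax_scale csum_scale)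
  qed
qed

lemma cmax_coord: "cmax (coord x) = csum (excess x)"
proof -
  define c where "c = csum (excess x) / cmax (excess x)"
  have "coord x = (\<lambda>i. c * excess x i)" by (simp add: coord_def c_def fun_eq_iff)
  moreover have "0 \<le> c" unfolding c_def
    by (intro divide_nonneg_nonneg csum_nonneg cmax_nonneg excess_vector)
  moreover have "c * cmax (excess x) = csum (excess x)"
    using csum_eq_0_iff[OF excess_vector] cmax_eq_0_iff[OF excess_vector] by (simp add: c_def)
  ultimately show ?thesis by (simp add: cmax_scale)
qed

lemma coord_rescaled: "coord x i / csum (coord x) * cmax (coord x) = excess x i"
proof (cases "\<forall>i. excess x i = 0")
  case False
  then have "cmax (excess x) \<noteq> 0" "csum (excess x) \<noteq> 0"
    using csum_eq_0_iff[OF excess_vector] cmax_eq_0_iff[OF excess_vector] by auto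
  then have "0 < cmax (excess x)" "0 < csum (excess x)"
    using csum_nonneg[OF excess_vector, of x] cmax_nonneg[OF excess_vector, of x] by auto
  moreover have "csum (coord x) = csum (excess x) / cmax (excess x) * csum (excess x)"
    unfolding coord_def using csum_scale[of "csum (excess x) / cmax (excess x)" "excess x"]
    by (simp add: field_simps)
  ultimately show ?thesis unfolding cmax_coord by (simp add: coord_def field_simps)
qed (simp add: coord_def)

lemma csum_excess_le_one: "x \<in> stdsimplex n \<Longrightarrow> csum (excess x) \<le> 1"
proof -
  assume x: "x \<in> stdsimplex n"
  have "csum (excess x) \<le> (\<Sum>i<k. x (e i))"
    unfolding csum_def using Jmin_nonneg[OF x] stdsimplex_nonneg[OF x]
    by (intro sum_mono) (auto simp: excess_def)
  also have "\<dots> \<le> (\<Sum>j\<in>J. x j) + (\<Sum>i<k. x (e i))"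
    using stdsimplex_nonneg[OF x] by (simp add: sum_nonneg)
  also have "\<dots> = 1" using sum_atMost_split[of x] x by (simp add: stdsimplex_def)
  finally show ?thesis .
qed

lemma csum_excess_face: "x \<in> face \<Longrightarrow> csum (excess x) = 1 - real (n+1) * Jmin x"
proof -
  assume x: "x \<in> face"
  define t where "t = Jmin x"
  have xs: "x \<in> stdsimplex n" and xJ: "\<forall>j\<in>J. x j = t" and xge: "\<forall>m\<le>n. t \<le> x m"
    using x unfolding face_iff t_def by auto
  have "1 = (\<Sum>j\<in>J. x j) + (\<Sum>i<k. x (e i))"
    using sum_atMost_split[of x] xs by (simp add: stdsimplex_def)
  also have "(\<Sum>j\<in>J. x j) = real (p+1) * t" using xJ J_card by simp
  also have "(\<Sum>i<k. x (e i)) = (\<Sum>i<k. t + excess x i)"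
    using xge e_mem by (intro sum.cong) (auto simp: excess_def t_def)
  also have "\<dots> = real k * t + csum (excess x)" by (simp add: sum.distrib csum_def)
  finally show ?thesis using p_le by (simp add: t_def algebra_simps)
qed

lemma coord_in_unitcube: "x \<in> stdsimplex n \<Longrightarrow> coord x \<in> unitcube k"
proof -
  assume x: "x \<in> stdsimplex n"
  have "coord x i \<le> 1" if "i < k" for i
    using cmax_ge[of i "coord x"] that csum_excess_le_one[OF x] by (simp add: cmax_coord)
  moreover have "coord x i = 0" if "k \<le> i" for i using that by (simp add: coord_def excess_def)
  moreover have "0 \<le> coord x i" for i unfolding coord_def
    by (intro mult_nonneg_nonneg divide_nonneg_nonneg csum_nonneg cmax_nonneg excess_vector)
      (simp add: excess_def)
  ultimately show ?thesis by (simp add: unitcube_def)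
qed

lemma param_coord: "x \<in> face \<Longrightarrow> param (coord x) = x"
proof
  fix m
  assume x: "x \<in> face"
  then have xs: "x \<in> stdsimplex n" and xJ: "\<forall>j\<in>J. x j = Jmin x"
    and xge: "\<forall>m\<le>n. Jmin x \<le> x m"
    unfolding face_iff by auto
  have base: "(1 - cmax (coord x)) / real (n+1) = Jmin x"
    using csum_excess_face[OF x] by (simp add: cmax_coord)
  show "param (coord x) m = x m"
  proof (cases "m \<notin> J \<and> m \<le> n")
    case True
    then obtain i where i: "i < k" "e i = m" "e_inv m = i" using e_inv_mem by blast
    then show ?thesis
      using True base xge coord_rescaled[of x i] by (auto simp: param_def excess_def)
  qed (use xJ xs base in \<open>auto simp: param_def stdsimplex_def\<close>)
qed

lemma continuous_on_param: "continuous_on (unitcube k) param"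
proof (rule continuous_on_coordinatewise_then_product)
  fix m
  have min: "continuous_on (unitcube k) (\<lambda>u. (1 - cmax u) / real (n+1))"
    by (intro continuous_on_divide continuous_on_diff continuous_on_const continuous_on_cmax) auto
  show "continuous_on (unitcube k) (\<lambda>u. param u m)"
  proof (cases "m \<notin> J \<and> m \<le> n")
    case True
    obtain i where i: "i < k" "e_inv m = i" using e_inv_mem True by blast
    have "continuous_on (unitcube k) (\<lambda>u. (u i / csum u) *\<^sub>R cmax u)"
    proof (rule continuous_on_scaleR_vanishing[OF continuous_on_cmax continuous_on_csum])
      show "\<forall>u\<in>unitcube k. csum u = 0 \<longrightarrow> cmax u = 0"
        using csum_eq_0_iff[OF unitcube_vector] cmax_eq_0_iff[OF unitcube_vector] by simp
      show "continuous_on {u \<in> unitcube k. csum u \<noteq> 0} (\<lambda>u. u i / csum u)"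
        by (intro continuous_on_divide continuous_on_coordinate continuous_on_csum) auto
      show "\<forall>u\<in>unitcube k. \<bar>u i / csum u\<bar> \<le> 1"
      proof
        fix u assume u: "u \<in> unitcube k"
        show "\<bar>u i / csum u\<bar> \<le> 1"
          using csum_ge[OF unitcube_vector[OF u] i(1)] unitcube_nonneg[OF u, of i]
          by (rule abs_divide_le_one[rotated])
      qed
    qed
    then have "continuous_on (unitcube k) (\<lambda>u. (1 - cmax u) / real (n+1) + (u i / csum u) * cmax u)"
      using min by (intro continuous_on_add) auto
    then show ?thesis using True i by (simp add: param_def)
  next
    case False
    then have eq: "(\<lambda>u. param u m) = (\<lambda>u. if m \<in> J then (1 - cmax u) / real (n+1) else 0)"
      by (auto simp: param_def)
    show ?thesis unfolding eq using min by (cases "m \<in> J") simp_all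
  qed
qed

lemma continuous_on_excess: "continuous_on S (\<lambda>x. excess x i)"
  unfolding excess_def
  by (cases "i < k") (simp_all add: continuous_on_max continuous_on_diff continuous_on_coordinate
      continuous_on_Jmin)

lemma continuous_on_coord: "continuous_on S coord"
proof (rule continuous_on_coordinatewise_then_product)
  fix i
  have max: "continuous_on T (\<lambda>x. cmax (excess x))" for T
    unfolding cmax_def by (rule continuous_on_Max_image) (auto intro: continuous_on_excess)
  have sum: "continuous_on S (\<lambda>x. csum (excess x))"
    unfolding csum_def by (intro continuous_on_sum continuous_on_excess)
  have "continuous_on S (\<lambda>x. (excess x i / cmax (excess x)) *\<^sub>R csum (excess x))"
  proof (rule continuous_on_scaleR_vanishing[OF sum max])
    show "\<forall>x\<in>S. cmax (excess x) = 0 \<longrightarrow> csum (excess x) = 0"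
      using csum_eq_0_iff[OF excess_vector] cmax_eq_0_iff[OF excess_vector] by simp
    show "continuous_on {x \<in> S. cmax (excess x) \<noteq> 0} (\<lambda>x. excess x i / cmax (excess x))"
      by (intro continuous_on_divide continuous_on_excess max) auto
    have "excess x i \<le> cmax (excess x)" for x
      using cmax_ge[of i "excess x"] cmax_nonneg[OF excess_vector, of x] excess_support[of x]
      by (cases "i \<le> k") auto
    then show "\<forall>x\<in>S. \<bar>excess x i / cmax (excess x)\<bar> \<le> 1"
      using excess_nonneg abs_divide_le_one by blast
  qed
  then show "continuous_on S (\<lambda>x. coord x i)" by (simp add: coord_def)
qed

section \<open>Restriction onto the iterated suspension\<close>

definition restrict_face :: "((nat \<Rightarrow> real) \<Rightarrow> 'a) \<Rightarrow> (nat \<Rightarrow> real) \<Rightarrow> 'a" where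
  "restrict_face f = (\<lambda>u. if u \<in> unitcube k then f (param u) else 0)"

lemma param_boundary:
  assumes u: "u \<in> unitcube_bdry k"
  shows "param u \<in> stdsimplex_bdry n \<or> (\<exists>m\<le>n. m \<notin> J \<and> param u \<in> stdsimplex_part n m)"
proof -
  have uc: "u \<in> unitcube k" using u by (simp add: unitcube_bdry_def)
  then have face: "param u \<in> face" by (rule param_in_face)
  obtain i where i: "i < k" "u i = 0 \<or> u i = 1" using u by (auto simp: unitcube_bdry_def)
  show ?thesis
  proof (cases "u i = 0")
    case True
    then have "param u (e i) = Jmin (param u)"
      unfolding Jmin_param using e_mem[OF i(1)] e_inv_e[OF i(1)] by (simp add: param_def)
    then have "param u \<in> stdsimplex_part n (e i)"
      using face unfolding face_iff stdsimplex_part_def by auto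
    then show ?thesis using e_mem[OF i(1)] by blast
  next
    case False
    then have "cmax u = 1" using i cmax_ge[of i u] cmax_le_one[OF uc] by simp
    moreover obtain j where "j \<in> J" using J_nonempty by blast
    ultimately have "j \<le> n" "param u j = 0" using J_le by (simp_all add: param_def)
    then show ?thesis using face unfolding stdsimplex_bdry_def face_def by blast
  qed
qed

lemma BalgJ_vanishes_param_boundary:
  "f \<in> BalgJ n I J \<Longrightarrow> u \<in> unitcube_bdry k \<Longrightarrow> f (param u) = 0"
  using param_boundary unfolding BalgJ_def Balg_def by blast

lemma restrict_face_in_susp:
  assumes f: "f \<in> BalgJ n I J"
  shows "restrict_face f \<in> susp k (\<Inter>j\<in>J. I j)"
proof -
  have fB: "f \<in> Balg n I" using f by (simp add: BalgJ_def)
  have "param ` unitcube k \<subseteq> stdsimplex n" using param_in_face face_subset_stdsimplex by blast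
  then have "continuous_on (unitcube k) (\<lambda>u. f (param u))"
    using fB by (intro continuous_on_compose2[OF _ continuous_on_param]) (auto simp: Balg_def)
  then have "continuous_on (unitcube k) (restrict_face f)"
    by (rule continuous_on_eq) (simp add: restrict_face_def)
  moreover have "restrict_face f u \<in> I j" if "j \<in> J" for u j
    using fB param_in_face[of u] that J_le ideals cstar_ideal_zero
    unfolding face_def Balg_def restrict_face_def by auto
  ultimately show ?thesis
    using BalgJ_vanishes_param_boundary[OF f]
    by (auto simp: susp_def restrict_face_def unitcube_bdry_def)
qed

text \<open>The cutoff is 1 on the face, where (n + 1) Jmin x = 1 - csum (excess x), and vanishes
  where Jmin does, in particular on the points of \<partial>\<Delta> with a vanishing J-coordinate.\<close>
definition cutoff :: "(nat \<Rightarrow> real) \<Rightarrow> real" where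
  "cutoff x = (if csum (excess x) < 1 then min 1 (real (n+1) * Jmin x / (1 - csum (excess x))) else 0)"

definition extend :: "((nat \<Rightarrow> real) \<Rightarrow> 'a) \<Rightarrow> (nat \<Rightarrow> real) \<Rightarrow> 'a" where
  "extend g x = (if x \<in> stdsimplex n then cutoff x *\<^sub>R g (coord x) else 0)"

lemma coord_boundary_if_excess_0:
  "x \<in> stdsimplex n \<Longrightarrow> i < k \<Longrightarrow> excess x i = 0 \<Longrightarrow> coord x \<in> unitcube_bdry k"
  using coord_in_unitcube[of x] unfolding unitcube_bdry_def by (auto simp: coord_def)

lemma coord_boundary_if_csum_1:
  "x \<in> stdsimplex n \<Longrightarrow> csum (excess x) = 1 \<Longrightarrow> coord x \<in> unitcube_bdry k"
  using cmax_eq_1_boundary[OF coord_in_unitcube] cmax_coord by metis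

lemma excess_0_on_part:
  assumes x: "x \<in> stdsimplex_part n m" and m: "m \<le> n" "m \<notin> J"
  shows "excess x (e_inv m) = 0"
proof -
  obtain j where "j \<in> J" "Jmin x = x j" using Jmin_attained by blast
  then have "x m \<le> Jmin x" using x J_le unfolding stdsimplex_part_def by auto
  then show ?thesis using e_inv_mem[OF m] by (simp add: excess_def)
qed

context
  fixes g assumes g: "g \<in> susp k (\<Inter>j\<in>J. I j)"
begin

lemma susp_vanishes_coord: "x \<in> stdsimplex n \<Longrightarrow> i < k \<Longrightarrow> excess x i = 0 \<Longrightarrow> g (coord x) = 0"
  using g coord_boundary_if_excess_0 by (auto simp: susp_def)

lemma continuous_on_extend: "continuous_on (stdsimplex n) (extend g)"
proof -
  have "continuous_on (stdsimplex n) (\<lambda>x. g (coord x))"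
    using g coord_in_unitcube
    by (intro continuous_on_compose2[OF _ continuous_on_coord]) (auto simp: susp_def)
  moreover have "continuous_on {x \<in> stdsimplex n. 1 - csum (excess x) \<noteq> 0} cutoff"
  proof -
    have "continuous_on {x \<in> stdsimplex n. 1 - csum (excess x) \<noteq> 0}
        (\<lambda>x. min 1 (real (n+1) * Jmin x / (1 - csum (excess x))))"
      unfolding csum_def
      by (intro continuous_on_min continuous_on_const continuous_on_divide continuous_on_mult
          continuous_on_diff continuous_on_sum continuous_on_excess continuous_on_Jmin) auto
    then show ?thesis
      by (rule continuous_on_eq) (use csum_excess_le_one in \<open>force simp: cutoff_def\<close>)
  qed
  moreover have "continuous_on (stdsimplex n) (\<lambda>x. 1 - csum (excess x))"
    unfolding csum_def by (intro continuous_on_diff continuous_on_const continuous_on_sum continuous_on_excess)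
  moreover have "\<forall>x\<in>stdsimplex n. 1 - csum (excess x) = 0 \<longrightarrow> g (coord x) = 0"
    using g coord_boundary_if_csum_1 by (auto simp: susp_def)
  moreover have "\<forall>x\<in>stdsimplex n. \<bar>cutoff x\<bar> \<le> 1"
    using Jmin_nonneg by (auto simp: cutoff_def)
  ultimately have "continuous_on (stdsimplex n) (\<lambda>x. cutoff x *\<^sub>R g (coord x))"
    by (intro continuous_on_scaleR_vanishing)
  then show ?thesis by (rule continuous_on_eq) (simp add: extend_def)
qed

lemma extend_vanishes_on_part:
  assumes "x \<in> stdsimplex_part n m" "m \<le> n" "m \<notin> J"
  shows "extend g x = 0"
proof -
  have "x \<in> stdsimplex n" using assms(1) by (simp add: stdsimplex_part_def)
  then have "g (coord x) = 0"
    using susp_vanishes_coord e_inv_mem[OF assms(2,3)] excess_0_on_part[OF assms] by blast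
  then show ?thesis by (simp add: extend_def)
qed

lemma extend_vanishes_on_bdry:
  assumes x: "x \<in> stdsimplex_bdry n"
  shows "extend g x = 0"
proof -
  have xs: "x \<in> stdsimplex n" using x by (simp add: stdsimplex_bdry_def)
  obtain m where m: "m \<le> n" "x m = 0" using x by (auto simp: stdsimplex_bdry_def)
  show ?thesis
  proof (cases "m \<in> J")
    case True
    then have "Jmin x = 0" using Jmin_le[OF True, of x] m Jmin_nonneg[OF xs] by simp
    then show ?thesis by (simp add: extend_def cutoff_def)
  next
    case False
    then have "excess x (e_inv m) = 0" using e_inv_mem[OF m(1) False] m Jmin_nonneg[OF xs]
      by (simp add: excess_def)
    then have "g (coord x) = 0" using susp_vanishes_coord[OF xs] e_inv_mem[OF m(1) False] by blast
    then show ?thesis by (simp add: extend_def)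
  qed
qed

lemma extend_in_BalgJ: "extend g \<in> BalgJ n I J"
proof -
  have "extend g x \<in> I j" if j: "j \<le> n" "x \<in> stdsimplex_part n j" for x j
  proof (cases "j \<in> J")
    case True
    then have "g (coord x) \<in> I j" using g by (auto simp: susp_def)
    moreover have "cstar_ideal (I j)" using ideals j(1) by simp
    ultimately show ?thesis by (simp add: extend_def cstar_ideal_scaleR cstar_ideal_zero)
  next
    case False
    then show ?thesis using j extend_vanishes_on_part ideals cstar_ideal_zero by metis
  qed
  moreover have "extend g x = 0" if "x \<notin> stdsimplex n" for x using that by (simp add: extend_def)
  ultimately show ?thesis
    using continuous_on_extend extend_vanishes_on_bdry extend_vanishes_on_part
    unfolding BalgJ_def Balg_def by blast
qed

lemma restrict_face_extend: "restrict_face (extend g) = g"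
proof
  fix u
  show "restrict_face (extend g) u = g u"
  proof (cases "u \<in> unitcube k")
    case True
    have "param u \<in> stdsimplex n" using param_in_face[OF True] face_subset_stdsimplex by blast
    moreover have "cutoff (param u) = 1 \<or> g u = 0"
      using g cmax_eq_1_boundary[OF True] cmax_le_one[OF True] cmax_coord[of "param u"]
      by (auto simp: susp_def cutoff_def coord_param[OF True] Jmin_param)
    ultimately show ?thesis using True by (auto simp: restrict_face_def extend_def coord_param)
  qed (use g in \<open>simp add: restrict_face_def susp_def\<close>)
qed

end

lemma restrict_face_image: "restrict_face ` BalgJ n I J = susp k (\<Inter>j\<in>J. I j)"
proof
  show "restrict_face ` BalgJ n I J \<subseteq> susp k (\<Inter>j\<in>J. I j)"
    using restrict_face_in_susp by blast
  show "susp k (\<Inter>j\<in>J. I j) \<subseteq> restrict_face ` BalgJ n I J"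
    using extend_in_BalgJ restrict_face_extend by (metis image_eqI subsetI)
qed

section \<open>The quotient norm\<close>

definition face_dist :: "(nat \<Rightarrow> real) \<Rightarrow> real" where
  "face_dist x = spread x + (\<Sum>m\<in>{..n} - J. max 0 (Jmin x - x m))"

lemma continuous_on_face_dist: "continuous_on S face_dist"
  unfolding face_dist_def[abs_def]
  by (intro continuous_on_add continuous_on_spread continuous_on_sum continuous_on_max
      continuous_on_const continuous_on_diff continuous_on_Jmin continuous_on_coordinate)

lemma face_dist_nonneg: "0 \<le> face_dist x"
  unfolding face_dist_def using spread_nonneg by (intro add_nonneg_nonneg sum_nonneg) auto

lemma face_dist_eq_0_iff: "x \<in> stdsimplex n \<Longrightarrow> face_dist x = 0 \<longleftrightarrow> x \<in> face"
proof -
  assume x: "x \<in> stdsimplex n"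
  have "max 0 (Jmin x - x m) = 0 \<longleftrightarrow> Jmin x \<le> x m" for m by (auto simp: max_def)
  then have "(\<Sum>m\<in>{..n} - J. max 0 (Jmin x - x m)) = 0 \<longleftrightarrow> (\<forall>m\<in>{..n} - J. Jmin x \<le> x m)"
    by (subst sum_nonneg_eq_0_iff) auto
  moreover have "0 \<le> (\<Sum>m\<in>{..n} - J. max 0 (Jmin x - x m))" by (intro sum_nonneg) auto
  ultimately have "face_dist x = 0 \<longleftrightarrow> spread x = 0 \<and> (\<forall>m\<in>{..n} - J. Jmin x \<le> x m)"
    unfolding face_dist_def using spread_nonneg[of x] by linarith
  then show ?thesis using x Jmin_le unfolding face_iff spread_eq_0_iff by auto
qed

lemma restrict_face_bdd_above_norm:
  assumes f: "f \<in> BalgJ n I J"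
  shows "bdd_above (range (\<lambda>u. norm (restrict_face f u)))"
proof (rule bdd_aboveI)
  fix y assume "y \<in> range (\<lambda>u. norm (restrict_face f u))"
  then show "y \<le> supnorm f"
    using supnorm_upper[OF BalgJ_bdd_above_norm[OF f]] supnorm_nonneg[OF BalgJ_bdd_above_norm[OF f]]
    by (auto simp: restrict_face_def)
qed

lemma norm_le_supnorm_restrict_face:
  assumes f: "f \<in> BalgJ n I J" and x: "x \<in> face"
  shows "norm (f x) \<le> supnorm (restrict_face f)"
proof -
  have "restrict_face f (coord x) = f x"
    using coord_in_unitcube[OF face_subset_stdsimplex[OF x]] param_coord[OF x]
    by (simp add: restrict_face_def)
  then show ?thesis using supnorm_upper[OF restrict_face_bdd_above_norm[OF f]] by metis
qed

lemma fadd_kernel_in_BalgJ: "f \<in> BalgJ n I J \<Longrightarrow> h \<in> kernel \<Longrightarrow> fadd f h \<in> BalgJ n I J"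
  unfolding fadd_def kernel_eq by (auto intro: BalgJ_add[OF ideals])

lemma supnorm_restrict_face_le:
  assumes f: "f \<in> BalgJ n I J" and h: "h \<in> kernel"
  shows "supnorm (restrict_face f) \<le> supnorm (fadd f h)"
proof (rule supnorm_least)
  fix u
  have bdd: "bdd_above (range (\<lambda>x. norm (fadd f h x)))"
    by (rule BalgJ_bdd_above_norm[OF fadd_kernel_in_BalgJ[OF f h]])
  show "norm (restrict_face f u) \<le> supnorm (fadd f h)"
  proof (cases "u \<in> unitcube k")
    case True
    then have "h (param u) = 0" using h param_in_face by (simp add: kernel_eq)
    then have "restrict_face f u = fadd f h (param u)" using True by (simp add: restrict_face_def fadd_def)
    then show ?thesis using supnorm_upper[OF bdd] by simp
  qed (use supnorm_nonneg[OF bdd] in \<open>simp add: restrict_face_def\<close>)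
qed

lemma face_dist_lower_bound:
  assumes f: "f \<in> BalgJ n I J" and face_bound: "\<forall>x\<in>face. norm (f x) \<le> M" and eps: "0 < \<epsilon>"
  shows "\<exists>\<delta>>0. \<forall>x\<in>stdsimplex n. M + \<epsilon> \<le> norm (f x) \<longrightarrow> \<delta> \<le> face_dist x"
proof -
  define C where "C = stdsimplex n \<inter> (\<lambda>x. norm (f x)) -` {M + \<epsilon>..}"
  have "continuous_on (stdsimplex n) (\<lambda>x. norm (f x))"
    using f by (intro continuous_on_norm) (simp add: BalgJ_def Balg_def)
  then have "closed C" unfolding C_def
    by (rule continuous_closed_preimage[OF _ closed_stdsimplex]) simp
  then have "compact C" using compact_Int_closed[OF compact_stdsimplex] unfolding C_def
    by (metis inf.left_idem)
  show ?thesis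
  proof (cases "C = {}")
    case True
    then show ?thesis by (intro exI[of _ 1]) (auto simp: C_def)
  next
    case False
    obtain x0 where x0: "x0 \<in> C" "\<forall>y\<in>C. face_dist x0 \<le> face_dist y"
      using continuous_attains_inf[OF \<open>compact C\<close> False continuous_on_face_dist] by blast
    then have "x0 \<notin> face" using face_bound eps by (fastforce simp: C_def)
    then have "0 < face_dist x0"
      using x0(1) face_dist_eq_0_iff face_dist_nonneg[of x0] by (auto simp: C_def order_le_less)
    then show ?thesis using x0 by (auto simp: C_def)
  qed
qed

lemma damped_in_kernel:
  assumes f: "f \<in> BalgJ n I J" and \<delta>: "0 < \<delta>"
  shows "(\<lambda>x. (max 0 (1 - face_dist x / \<delta>) - 1) *\<^sub>R f x) \<in> kernel"
proof -
  have "(\<lambda>x. (max 0 (1 - face_dist x / \<delta>) - 1) *\<^sub>R f x) \<in> BalgJ n I J"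
  proof (rule BalgJ_scaleR_function[OF ideals])
    show "f \<in> Balg n I" using f by (simp add: BalgJ_def)
    then show "continuous_on (stdsimplex n) (\<lambda>x. (max 0 (1 - face_dist x / \<delta>) - 1) *\<^sub>R f x)"
      using \<delta> by (intro continuous_on_scaleR continuous_on_diff continuous_on_max continuous_on_const
          continuous_on_divide continuous_on_face_dist) (auto simp: Balg_def)
    show "\<forall>j'\<le>n. j' \<notin> J \<longrightarrow> (\<forall>x\<in>stdsimplex_part n j'. (max 0 (1 - face_dist x / \<delta>) - 1) *\<^sub>R f x = 0)"
      using f unfolding BalgJ_def by auto
  qed
  moreover have "face_dist x = 0" if "x \<in> face" for x
    using that face_dist_eq_0_iff face_subset_stdsimplex by blast
  ultimately show ?thesis unfolding kernel_eq by auto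
qed

lemma exists_kernel_close:
  assumes f: "f \<in> BalgJ n I J" and eps: "0 < \<epsilon>"
  shows "\<exists>h\<in>kernel. supnorm (fadd f h) \<le> supnorm (restrict_face f) + \<epsilon>"
proof -
  define M where "M = supnorm (restrict_face f)"
  have "0 \<le> M" unfolding M_def by (rule supnorm_nonneg[OF restrict_face_bdd_above_norm[OF f]])
  obtain \<delta> where \<delta>: "0 < \<delta>" and far: "\<forall>x\<in>stdsimplex n. M + \<epsilon> \<le> norm (f x) \<longrightarrow> \<delta> \<le> face_dist x"
    using face_dist_lower_bound[OF f _ eps] norm_le_supnorm_restrict_face[OF f] unfolding M_def by blast
  define \<psi> where "\<psi> x = max 0 (1 - face_dist x / \<delta>)" for x
  have "norm (\<psi> x *\<^sub>R f x) \<le> M + \<epsilon>" for x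
  proof (cases "x \<in> stdsimplex n \<and> face_dist x < \<delta>")
    case True
    then have "norm (f x) < M + \<epsilon>" using far by (meson not_le)
    moreover have "0 \<le> \<psi> x" "\<psi> x \<le> 1" using face_dist_nonneg[of x] \<delta> by (auto simp: \<psi>_def)
    ultimately have "\<psi> x * norm (f x) \<le> M + \<epsilon>"
      using mult_left_le_one_le[of "norm (f x)" "\<psi> x"] by simp
    then show ?thesis using \<open>0 \<le> \<psi> x\<close> by simp
  next
    case False
    then have "\<psi> x = 0 \<or> f x = 0"
      using f \<delta> by (auto simp: \<psi>_def BalgJ_def Balg_def)
    then show ?thesis using \<open>0 \<le> M\<close> eps by auto
  qed
  then have "supnorm (fadd f (\<lambda>x. (\<psi> x - 1) *\<^sub>R f x)) \<le> M + \<epsilon>"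
    by (intro supnorm_least) (simp add: fadd_def algebra_simps)
  then show ?thesis using damped_in_kernel[OF f \<delta>] unfolding M_def \<psi>_def by blast
qed

lemma supnorm_restrict_face_eq_quot_norm:
  assumes f: "f \<in> BalgJ n I J"
  shows "supnorm (restrict_face f) = quot_norm kernel f"
proof (rule antisym)
  show "supnorm (restrict_face f) \<le> quot_norm kernel f"
    unfolding quot_norm_def using zero_in_kernel supnorm_restrict_face_le[OF f]
    by (intro cINF_greatest) auto
  have "bdd_below ((\<lambda>h. supnorm (fadd f h)) ` kernel)"
  proof (rule bdd_belowI)
    fix y assume "y \<in> (\<lambda>h. supnorm (fadd f h)) ` kernel"
    then obtain h where "h \<in> kernel" "y = supnorm (fadd f h)" by blast
    then show "0 \<le> y"
      using supnorm_nonneg[OF BalgJ_bdd_above_norm[OF fadd_kernel_in_BalgJ[OF f]]] by simp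
  qed
  show "quot_norm kernel f \<le> supnorm (restrict_face f)"
  proof (rule field_le_epsilon)
    fix \<epsilon> :: real assume "0 < \<epsilon>"
    then obtain h where "h \<in> kernel" "supnorm (fadd f h) \<le> supnorm (restrict_face f) + \<epsilon>"
      using exists_kernel_close[OF f] by blast
    then show "quot_norm kernel f \<le> supnorm (restrict_face f) + \<epsilon>"
      unfolding quot_norm_def using \<open>bdd_below _\<close> by (intro cINF_lower2) auto
  qed
qed

lemma restrict_face_kernel: "h \<in> kernel \<Longrightarrow> restrict_face h = (\<lambda>_. 0)"
  using param_in_face by (auto simp: kernel_eq restrict_face_def)

lemma coset_kernel_subset:
  assumes "f \<in> BalgJ n I J" "g \<in> BalgJ n I J" "\<forall>x\<in>face. f x = g x"
  shows "coset kernel f \<subseteq> coset kernel g"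
proof
  fix h assume "h \<in> coset kernel f"
  then obtain k' where k': "k' \<in> kernel" "h = fadd f k'" unfolding coset_def by blast
  have "(\<lambda>x. (f x - g x) + k' x) \<in> kernel"
    using assms k'(1) BalgJ_add[OF ideals] BalgJ_diff[OF ideals] unfolding kernel_eq by auto
  moreover have "h = fadd g (\<lambda>x. (f x - g x) + k' x)" using k' by (simp add: fadd_def)
  ultimately show "h \<in> coset kernel g" unfolding coset_def by blast
qed

lemma coset_kernel_eq_if_restrict_face_eq:
  assumes f: "f \<in> BalgJ n I J" and g: "g \<in> BalgJ n I J"
    and eq: "restrict_face f = restrict_face g"
  shows "coset kernel f = coset kernel g"
proof -
  have "f x = g x" if x: "x \<in> face" for x
    using fun_cong[OF eq, of "coord x"] coord_in_unitcube[OF face_subset_stdsimplex[OF x]]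
      param_coord[OF x] by (simp add: restrict_face_def)
  then show ?thesis using coset_kernel_subset f g by (metis subset_antisym)
qed

end

theorem lemma4p4p10:
  fixes I :: "nat \<Rightarrow> 'a::cstar_algebra set"
    and n p :: nat and J :: "nat set"
  assumes ideals: "\<forall>j\<le>n. cstar_ideal (I j)"
    and sum_all: "\<forall>a::'a. \<exists>b. (\<forall>j\<le>n. b j \<in> I j) \<and> a = (\<Sum>j\<le>n. b j)"
    and p_le: "p \<le> n"
    and J_sub: "J \<subseteq> {..n}"
    and J_card: "card J = p + 1"
  shows "quot_cstar_iso (BalgJ n I J) (BalgJ n I J \<inter> Qalg n I (int p - 1))
           (susp (n - p) (\<Inter>j\<in>J. I j))"
proof -
  have "card ({..n} - J) = n - p"
    using J_sub J_card by (simp add: card_Diff_subset finite_subset)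
  then obtain e where "bij_betw e {..<n-p} ({..n} - J)"
    using finite_same_card_bij[of "{..<n-p}" "{..n} - J"] by auto
  then interpret simplex_face I n p J e
    using ideals p_le J_sub J_card by unfold_locales
  show ?thesis
    unfolding kernel_def[symmetric]
  proof (rule quot_cstar_iso_via_hom[where R = restrict_face])
    show "(\<lambda>_. 0) \<in> kernel" by (rule zero_in_kernel)
    show "restrict_face h = (\<lambda>_. 0)" if "h \<in> kernel" for h using that by (rule restrict_face_kernel)
    show "restrict_face ` BalgJ n I J = susp (n - p) (\<Inter>j\<in>J. I j)" by (rule restrict_face_image)
    show "coset kernel f = coset kernel g"
      if "f \<in> BalgJ n I J" "g \<in> BalgJ n I J" "restrict_face f = restrict_face g" for f g
      using that by (rule coset_kernel_eq_if_restrict_face_eq)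
    show "supnorm (restrict_face f) = quot_norm kernel f" if "f \<in> BalgJ n I J" for f
      using that by (rule supnorm_restrict_face_eq_quot_norm)
  qed (simp_all add: restrict_face_def fadd_def fmul_def fscale_def fadj_def fun_eq_iff
      scaleC_zero adj_zero)
qed

end
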